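(* Let $0<\varepsilon\le1$ and $\alpha\in(0,1)$. Then for every $m\in\{0,1,2,\dots\}$, $x^{2m}e^{-\alpha x^2/(2\sqrt\varepsilon)}\in D(S_\varepsilon)$ and $$S_\varepsilon\, x^{2m}e^{-\alpha x^2/(2\sqrt\varepsilon)}=-\frac{i}{2\sqrt\varepsilon}\sum_{k=0}^m\binom mk(-2\sqrt\varepsilon)^k\,\frac{d^k}{d\alpha^k}\Big(\log\frac{1+\alpha}{1-\alpha}\Big)\,x^{2m-2k}e^{-\alpha x^2/(2\sqrt\varepsilon)}.$$
   Context: Work in $L^2(\mathbb{R})$. Let $q$ be multiplication by $x$ and $p=-i\,d/dx$. Let $t=q^{-1}p$ with $D(t)=\{f\in D(p):pf\in D(q^{-1})\}$ and $L^2_0$ the subspace of even functions. Define $S_\varepsilon$ in $L^2_0$ by $D(S_\varepsilon)=\{f\in L^2_0\cap\bigcap_{n\ge0}D(t^{2n+1}):\lim_{N\to\infty}\sum_{n=0}^N\frac{(-1)^n}{2n+1}(\sqrt\varepsilon t)^{2n+1}f$ exists in norm$\}$, $S_\varepsilon f=-\varepsilon^{-1/2}\sum_{n\ge0}\frac{(-1)^n}{2n+1}(\sqrt\varepsilon t)^{2n+1}f$. *)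

theory Defs
  imports "HOL-Analysis.Analysis"
begin

text \<open>Elements of L^2(R) are represented by (Borel measurable) functions real => complex,
  considered up to equality almost everywhere w.r.t. Lebesgue measure.\<close>

definition sqint :: "(real \<Rightarrow> complex) \<Rightarrow> bool" where
  "sqint f \<longleftrightarrow> f \<in> borel_measurable lborel \<and> integrable lborel (\<lambda>x. (cmod (f x))^2)"

definition l2norm :: "(real \<Rightarrow> complex) \<Rightarrow> real" where
  "l2norm f = sqrt (LINT x|lborel. (cmod (f x))^2)"

definition test_fun :: "(real \<Rightarrow> real) \<Rightarrow> bool" where
  "test_fun \<phi> \<longleftrightarrow> (\<forall>n x. (deriv ^^ n) \<phi> differentiable (at x)) \<and> bounded {x. \<phi> x \<noteq> 0}"

text \<open>Graph of the momentum operator p = -i d/dx with its self-adjoint domain H^1: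
  p f = g iff f, g in L^2 and the weak derivative of f is i*g.\<close>
definition p_rel :: "(real \<Rightarrow> complex) \<Rightarrow> (real \<Rightarrow> complex) \<Rightarrow> bool" where
  "p_rel f g \<longleftrightarrow> sqint f \<and> sqint g \<and>
     (\<forall>\<phi>. test_fun \<phi> \<longrightarrow>
        (LINT x|lborel. f x * complex_of_real (deriv \<phi> x))
          = - (LINT x|lborel. \<i> * g x * complex_of_real (\<phi> x)))"

text \<open>Graph of t = q^{-1} p, with D(t) = {f in D(p). p f in D(q^{-1})}.\<close>
definition t_rel :: "(real \<Rightarrow> complex) \<Rightarrow> (real \<Rightarrow> complex) \<Rightarrow> bool" where
  "t_rel f h \<longleftrightarrow> (\<exists>g. p_rel f g \<and> sqint h \<and> (AE x in lborel. h x = g x / complex_of_real x))"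

definition even_fun :: "(real \<Rightarrow> complex) \<Rightarrow> bool" where
  "even_fun f \<longleftrightarrow> (AE x in lborel. f (- x) = f x)"

text \<open>Graph of S_eps: f in D(S_eps) and S_eps f = h.  The sequence T is the sequence of
  iterates T j = t^j f (f in the intersection of all D(t^(2n+1))).\<close>
definition S_graph :: "real \<Rightarrow> (real \<Rightarrow> complex) \<Rightarrow> (real \<Rightarrow> complex) \<Rightarrow> bool" where
  "S_graph \<epsilon> f h \<longleftrightarrow> sqint f \<and> even_fun f \<and>
     (\<exists>T L. T 0 = f \<and> (\<forall>j. t_rel (T j) (T (Suc j))) \<and> sqint L \<and>
        ((\<lambda>N. l2norm (\<lambda>x. (\<Sum>n\<le>N. complex_of_real ((-1)^n / real (2*n+1) * (sqrt \<epsilon>)^(2*n+1))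
                                   * T (2*n+1) x) - L x)) \<longlonglongrightarrow> 0) \<and>
        (AE x in lborel. h x = - complex_of_real (1 / sqrt \<epsilon>) * L x))"

definition S_dom :: "real \<Rightarrow> (real \<Rightarrow> complex) set" where
  "S_dom \<epsilon> = {f. \<exists>h. S_graph \<epsilon> f h}"

end

theory Submission
  imports Defs "HOL-Probability.Probability"
begin

(*
  On even functions t = -i x^(-1) d/dx = -2i d/d(x^2), so with c = alpha/(2 sqrt eps) the
  iterate t^j (x^(2m) e^(-c x^2)) is (-2i)^j times the j-th derivative of u^m e^(-c u) at u = x^2.
  By Leibniz' rule this is a combination of the m + 1 Gaussians x^(2(m-k)) e^(-c x^2) with
  coefficients C(j,k) C(m,k) k! (-c)^(j-k).  Hence the partial sums of the series defining S_eps
  are such combinations too, and L^2 convergence reduces to convergence of the m + 1 coefficient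
  series.  Since (-1)^n (-2i)^(2n+1) = -i 2^(2n+1), the alternating signs cancel and the k-th
  coefficient series is the k times termwise differentiated power series
  log((1+alpha)/(1-alpha)) = sum 2 alpha^(2n+1)/(2n+1), convergent for |alpha| < 1.
  The iterates are smooth, and integration by parts against test functions identifies their
  classical derivatives with the weak ones required by the graph of p.
*)

lemma integrable_power_mult_exp_neg_square:
  fixes c :: real
  assumes "0 < c"
  shows "integrable lborel (\<lambda>x. x^k * exp (- c * x\<^sup>2))"
proof -
  define \<sigma> where "\<sigma> = 1 / sqrt (2 * c)"
  have \<sigma>: "0 < \<sigma>" "2 * \<sigma>\<^sup>2 = 1 / c"
    using assms by (simp_all add: \<sigma>_def power_divide)
  have "integrable lborel (\<lambda>x. sqrt (2 * pi * \<sigma>\<^sup>2) * (normal_density 0 \<sigma> x * (x - 0)^k))"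
    using \<sigma> by (intro integrable_mult_right integrable_normal_moment)
  also have "(\<lambda>x. sqrt (2 * pi * \<sigma>\<^sup>2) * (normal_density 0 \<sigma> x * (x - 0)^k)) = (\<lambda>x. x^k * exp (- c * x\<^sup>2))"
    using \<sigma> by (auto simp: normal_density_def fun_eq_iff)
  finally show ?thesis .
qed

definition gauss_weight :: "nat \<Rightarrow> real \<Rightarrow> real \<Rightarrow> complex" where
  "gauss_weight N c x = of_real ((1 + x\<^sup>2)^N * exp (- c * x\<^sup>2))"

lemma norm_gauss_weight: "cmod (gauss_weight N c x) = (1 + x\<^sup>2)^N * exp (- c * x\<^sup>2)"
  unfolding gauss_weight_def norm_of_real by simp

lemma sqint_gauss_weight:
  assumes "0 < c"
  shows "sqint (gauss_weight N c)"
proof -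
  have "(\<lambda>x. (cmod (gauss_weight N c x))\<^sup>2) = (\<lambda>x. \<Sum>i\<le>2*N. real (2*N choose i) * (x^(2*i) * exp (- (2*c) * x\<^sup>2)))"
  proof
    fix x :: real
    have "(x\<^sup>2 + 1)^(2*N) = (\<Sum>i\<le>2*N. real (2*N choose i) * x^(2*i))"
      by (subst binomial_ring) (simp add: power_mult)
    then show "(cmod (gauss_weight N c x))\<^sup>2 = (\<Sum>i\<le>2*N. real (2*N choose i) * (x^(2*i) * exp (- (2*c) * x\<^sup>2)))"
      by (simp add: norm_gauss_weight power_mult_distrib sum_distrib_right mult.assoc add.commute mult.commute[of N]
          flip: power_mult exp_of_nat_mult)
  qed
  moreover have "integrable lborel (\<lambda>x. \<Sum>i\<le>2*N. real (2*N choose i) * (x^(2*i) * exp (- (2*c) * x\<^sup>2)))"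
    using assms by (intro Bochner_Integration.integrable_sum integrable_mult_right integrable_power_mult_exp_neg_square) simp
  moreover have "gauss_weight N c \<in> borel_measurable lborel"
    unfolding gauss_weight_def by measurable
  ultimately show ?thesis
    unfolding sqint_def by simp
qed

lemma
  fixes f g :: "real \<Rightarrow> complex"
  assumes f: "f \<in> borel_measurable lborel" and g: "sqint g" and "0 \<le> C"
    and le: "\<And>x. cmod (f x) \<le> C * cmod (g x)"
  shows sqint_dominated: "sqint f"
    and l2norm_dominated: "l2norm f \<le> C * l2norm g"
proof -
  have le2: "(cmod (f x))\<^sup>2 \<le> C\<^sup>2 * (cmod (g x))\<^sup>2" for x
    using le[of x] by (metis norm_ge_zero power_mono power_mult_distrib)
  have ig: "integrable lborel (\<lambda>x. C\<^sup>2 * (cmod (g x))\<^sup>2)"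
    using g unfolding sqint_def by simp
  have if2: "integrable lborel (\<lambda>x. (cmod (f x))\<^sup>2)"
    by (rule Bochner_Integration.integrable_bound[OF ig]) (use f le2 in auto)
  then show "sqint f"
    using f unfolding sqint_def by simp
  have "l2norm f \<le> sqrt (LINT x|lborel. C\<^sup>2 * (cmod (g x))\<^sup>2)"
    unfolding l2norm_def by (intro real_sqrt_le_mono integral_mono if2 ig le2)
  also have "\<dots> = C * l2norm g"
    using \<open>0 \<le> C\<close> by (simp add: l2norm_def real_sqrt_mult)
  finally show "l2norm f \<le> C * l2norm g" .
qed

lemma
  assumes "test_fun \<phi>"
  shows test_fun_has_real_derivative: "(\<phi> has_real_derivative deriv \<phi> x) (at x)"
    and continuous_on_deriv_test_fun: "continuous_on UNIV (deriv \<phi>)"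
proof -
  have "(deriv ^^ n) \<phi> differentiable (at x)" for n x
    using assms unfolding test_fun_def by blast
  from this[of 0] this[of 1] show "(\<phi> has_real_derivative deriv \<phi> x) (at x)"
    and "continuous_on UNIV (deriv \<phi>)"
    by (auto simp: DERIV_deriv_iff_real_differentiable
        intro!: continuous_at_imp_continuous_on differentiable_imp_continuous_within)
qed

lemma test_fun_vanishes:
  assumes "test_fun \<phi>"
  obtains R where "\<And>x. R < \<bar>x\<bar> \<Longrightarrow> \<phi> x = 0 \<and> deriv \<phi> x = 0"
proof -
  obtain R where R: "\<And>x. \<phi> x \<noteq> 0 \<Longrightarrow> \<bar>x\<bar> \<le> R"
    using assms unfolding test_fun_def bounded_iff by auto
  have "\<phi> x = 0 \<and> deriv \<phi> x = 0" if "R < \<bar>x\<bar>" for x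
  proof
    have "\<forall>\<^sub>F y in nhds x. y \<in> {y. R < \<bar>y\<bar>}"
      using that by (intro eventually_nhds_in_open) (auto intro!: open_Collect_less continuous_intros)
    then have "\<forall>\<^sub>F y in nhds x. \<phi> y = 0"
      by (rule eventually_mono) (use R in force)
    then have "deriv \<phi> x = deriv (\<lambda>_. 0) x"
      by (rule deriv_cong_ev) simp
    then show "deriv \<phi> x = 0"
      by simp
  qed (use R that in force)
  then show thesis
    using that by blast
qed

lemma indicator_scaleR_eq_if_vanishing_outside:
  fixes h :: "real \<Rightarrow> 'a::real_vector"
  assumes "\<And>x. R < \<bar>x\<bar> \<Longrightarrow> h x = 0"
  shows "(\<lambda>x. indicator {-\<bar>R\<bar>..\<bar>R\<bar>} x *\<^sub>R h x) = h"
  using assms by (force simp: indicator_def abs_le_iff)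

lemma integrable_continuous_if_vanishing_outside:
  fixes h :: "real \<Rightarrow> 'a::{banach, second_countable_topology}"
  assumes "continuous_on UNIV h" "\<And>x. R < \<bar>x\<bar> \<Longrightarrow> h x = 0"
  shows "integrable lborel h"
  using borel_integrable_atLeastAtMost'[of "-\<bar>R\<bar>" "\<bar>R\<bar>" h] assms
  by (simp add: set_integrable_def indicator_scaleR_eq_if_vanishing_outside continuous_on_subset)

lemma integral_derivative_eq_0_if_vanishing_outside:
  fixes P :: "real \<Rightarrow> 'a::euclidean_space"
  assumes der: "\<And>x. (P has_vector_derivative P' x) (at x)" and cont: "continuous_on UNIV P'"
    and vanish: "\<And>x. R < \<bar>x\<bar> \<Longrightarrow> P x = 0 \<and> P' x = 0"
  shows "integral\<^sup>L lborel P' = 0"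
proof -
  have "integral\<^sup>L lborel P' = integral\<^sup>L lborel (\<lambda>x. indicator {-(\<bar>R\<bar>+1)..\<bar>R\<bar>+1} x *\<^sub>R P' x)"
    using indicator_scaleR_eq_if_vanishing_outside[of "\<bar>R\<bar>+1" P'] vanish by simp
  also have "\<dots> = P (\<bar>R\<bar>+1) - P (-(\<bar>R\<bar>+1))"
  proof (rule integral_FTC_atLeastAtMost)
    show "(P has_vector_derivative P' x) (at x within {-(\<bar>R\<bar>+1)..\<bar>R\<bar>+1})" for x
      using der by (rule has_vector_derivative_at_within)
    show "continuous_on {-(\<bar>R\<bar>+1)..\<bar>R\<bar>+1} P'"
      using cont by (rule continuous_on_subset) simp
  qed simp
  also have "\<dots> = 0"
    using vanish[of "\<bar>R\<bar>+1"] vanish[of "-(\<bar>R\<bar>+1)"] by simp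
  finally show ?thesis .
qed

lemma p_rel_of_has_vector_derivative:
  fixes f g :: "real \<Rightarrow> complex"
  assumes der: "\<And>x. (f has_vector_derivative \<i> * g x) (at x)" and cont: "continuous_on UNIV g"
    and "sqint f" "sqint g"
  shows "p_rel f g"
  unfolding p_rel_def
proof (intro conjI allI impI assms)
  fix \<phi> assume \<phi>: "test_fun \<phi>"
  obtain R where R: "\<And>x. R < \<bar>x\<bar> \<Longrightarrow> \<phi> x = 0 \<and> deriv \<phi> x = 0"
    using test_fun_vanishes[OF \<phi>] by blast
  have cont_f: "continuous_on UNIV f"
    using der by (intro continuous_at_imp_continuous_on ballI has_vector_derivative_continuous) auto
  have cont_\<phi>: "continuous_on UNIV \<phi>"
    using test_fun_has_real_derivative[OF \<phi>]
    by (intro continuous_at_imp_continuous_on ballI DERIV_isCont) auto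
  define H where "H x = f x * of_real (deriv \<phi> x)" for x
  define K where "K x = \<i> * g x * of_real (\<phi> x)" for x
  have cont_HK: "continuous_on UNIV H" "continuous_on UNIV K"
    unfolding H_def K_def
    by (intro continuous_intros cont_f cont cont_\<phi> continuous_on_deriv_test_fun[OF \<phi>])+
  have "integral\<^sup>L lborel (\<lambda>x. H x + K x) = 0"
  proof (rule integral_derivative_eq_0_if_vanishing_outside)
    show "((\<lambda>x. f x * of_real (\<phi> x)) has_vector_derivative H x + K x) (at x)" for x
      unfolding H_def K_def
      by (intro has_vector_derivative_mult der has_vector_derivative_of_real
          test_fun_has_real_derivative[OF \<phi>])
  next
    show "continuous_on UNIV (\<lambda>x. H x + K x)"
      using cont_HK by (intro continuous_intros)
  next
    fix x assume "R < \<bar>x\<bar>"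
    then show "f x * of_real (\<phi> x) = 0 \<and> H x + K x = 0"
      using R by (simp add: H_def K_def)
  qed
  moreover have "integrable lborel H" "integrable lborel K"
    using cont_HK R by (auto intro!: integrable_continuous_if_vanishing_outside[where R = R] simp: H_def K_def)
  ultimately show "(LINT x|lborel. f x * of_real (deriv \<phi> x)) = - (LINT x|lborel. \<i> * g x * of_real (\<phi> x))"
    unfolding H_def K_def by (simp add: eq_neg_iff_add_eq_0)
qed

lemma diff_times_binomial: "(n - k) * (n choose k) = Suc k * (n choose Suc k)"
  by (metis binomial_absorb_comp binomial_absorption)

definition pow_exp_deriv_coeff :: "nat \<Rightarrow> real \<Rightarrow> nat \<Rightarrow> nat \<Rightarrow> real" where
  "pow_exp_deriv_coeff m c j k = real (j choose k) * real (m choose k) * fact k * (- c)^(j - k)"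

definition pow_exp_deriv :: "nat \<Rightarrow> real \<Rightarrow> nat \<Rightarrow> real \<Rightarrow> real" where
  "pow_exp_deriv m c j u = (\<Sum>k\<le>m. pow_exp_deriv_coeff m c j k * u^(m - k)) * exp (- c * u)"

lemma pow_exp_deriv_0: "pow_exp_deriv m c 0 u = u^m * exp (- c * u)"
proof -
  have "(\<Sum>k\<le>m. pow_exp_deriv_coeff m c 0 k * u^(m - k)) = (\<Sum>k\<le>m. if k = 0 then u^m else 0)"
    by (intro sum.cong) (auto simp: pow_exp_deriv_coeff_def)
  then show ?thesis
    by (simp add: pow_exp_deriv_def)
qed

lemma pow_exp_deriv_coeff_Suc_0:
  "pow_exp_deriv_coeff m c (Suc j) 0 = - c * pow_exp_deriv_coeff m c j 0"
  by (simp add: pow_exp_deriv_coeff_def)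

lemma pow_exp_deriv_coeff_Suc_Suc:
  "pow_exp_deriv_coeff m c (Suc j) (Suc k)
     = real (m - k) * pow_exp_deriv_coeff m c j k - c * pow_exp_deriv_coeff m c j (Suc k)"
proof -
  have "real (m - k) * real (m choose k) = real (Suc k) * real (m choose Suc k)"
    using diff_times_binomial[of m k] by (metis of_nat_mult)
  then have "real (m choose Suc k) * fact (Suc k) = real (m - k) * real (m choose k) * fact k"
    by (simp only: fact_Suc mult_ac)
  moreover have "real (j choose Suc k) * (- c)^(j - k) = - c * (real (j choose Suc k) * (- c)^(j - Suc k))"
  proof (cases "j \<le> k")
    case False
    then have "j - k = Suc (j - Suc k)"
      by simp
    then show ?thesis
      by simp
  qed (simp add: binomial_eq_0)
  ultimately show ?thesis
    unfolding pow_exp_deriv_coeff_def by (simp add: algebra_simps)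
qed

lemma has_real_derivative_pow_exp_deriv:
  "(pow_exp_deriv m c j has_real_derivative pow_exp_deriv m c (Suc j) u) (at u)"
proof -
  define a where "a = pow_exp_deriv_coeff m c j"
  define P where "P = (\<Sum>k\<le>m. a k * u^(m - k))"
  define P' where "P' = (\<Sum>k\<le>m. a k * (real (m - k) * u^(m - k - 1)))"
  have deriv: "(pow_exp_deriv m c j has_real_derivative (P' - c * P) * exp (- c * u)) (at u)"
    unfolding pow_exp_deriv_def[abs_def] a_def[symmetric] P_def P'_def
    by (auto intro!: derivative_eq_intros simp: algebra_simps)
  have P'_eq: "P' = (\<Sum>k<m. real (m - k) * a k * u^(m - Suc k))"
    by (simp add: P'_def atMost_Suc_eq_insert_0 lessThan_Suc_atMost[symmetric] ac_simps)
  have P_eq: "P = a 0 * u^m + (\<Sum>k<m. a (Suc k) * u^(m - Suc k))"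
    by (simp add: P_def sum.atMost_shift)
  have "(\<Sum>k\<le>m. pow_exp_deriv_coeff m c (Suc j) k * u^(m - k))
      = - c * a 0 * u^m + (\<Sum>k<m. (real (m - k) * a k - c * a (Suc k)) * u^(m - Suc k))"
    by (simp add: sum.atMost_shift a_def pow_exp_deriv_coeff_Suc_0 pow_exp_deriv_coeff_Suc_Suc)
  also have "\<dots> = P' - c * P"
    unfolding P'_eq P_eq
    by (simp add: sum_subtractf sum_distrib_left left_diff_distrib ring_distribs ac_simps del: of_nat_diff)
  finally show ?thesis
    using deriv by (simp add: pow_exp_deriv_def)
qed

definition gauss_comb :: "nat \<Rightarrow> real \<Rightarrow> (nat \<Rightarrow> complex) \<Rightarrow> real \<Rightarrow> complex" where
  "gauss_comb m c b x = (\<Sum>k\<le>m. b k * of_real ((x\<^sup>2)^(m - k) * exp (- c * x\<^sup>2)))"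

lemma continuous_on_gauss_comb: "continuous_on S (gauss_comb m c b)"
  unfolding gauss_comb_def by (intro continuous_intros)

lemma norm_gauss_comb_le: "cmod (gauss_comb m c b x) \<le> (\<Sum>k\<le>m. cmod (b k)) * cmod (gauss_weight m c x)"
proof -
  have "(x\<^sup>2)^(m - k) \<le> (1 + x\<^sup>2)^m" for k
    using power_mono[of "x\<^sup>2" "1 + x\<^sup>2" "m - k"] power_increasing[of "m - k" m "1 + x\<^sup>2"] by simp
  then have "cmod (b k * of_real ((x\<^sup>2)^(m - k) * exp (- c * x\<^sup>2))) \<le> cmod (b k) * cmod (gauss_weight m c x)" for k
    unfolding norm_gauss_weight norm_mult norm_of_real by (intro mult_left_mono) auto
  then show ?thesis
    unfolding gauss_comb_def sum_distrib_right by (intro order_trans[OF norm_sum] sum_mono)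
qed

lemma borel_measurable_gauss_comb: "gauss_comb m c b \<in> borel_measurable lborel"
  using borel_measurable_continuous_onI[OF continuous_on_gauss_comb] by simp

lemma
  assumes "0 < c"
  shows sqint_gauss_comb: "sqint (gauss_comb m c b)"
    and l2norm_gauss_comb_le: "l2norm (gauss_comb m c b) \<le> (\<Sum>k\<le>m. cmod (b k)) * l2norm (gauss_weight m c)"
  using sqint_dominated[OF _ _ _ norm_gauss_comb_le] l2norm_dominated[OF _ _ _ norm_gauss_comb_le]
    borel_measurable_gauss_comb sqint_gauss_weight[OF assms] by (simp_all add: sum_nonneg)

lemma sqint_mult_gauss_comb:
  assumes "0 < c"
  shows "sqint (\<lambda>x. of_real x * gauss_comb m c b x)"
proof (rule sqint_dominated)
  show "(\<lambda>x. of_real x * gauss_comb m c b x) \<in> borel_measurable lborel"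
    using borel_measurable_gauss_comb by measurable
  show "cmod (of_real x * gauss_comb m c b x) \<le> (\<Sum>k\<le>m. cmod (b k)) * cmod (gauss_weight (Suc m) c x)" for x
  proof -
    have "\<bar>x\<bar> \<le> 1 + x\<^sup>2"
      using zero_le_power2[of "\<bar>x\<bar> - 1"] by (simp add: power2_eq_square algebra_simps)
    then have "cmod (of_real x * gauss_comb m c b x) \<le> (1 + x\<^sup>2) * ((\<Sum>k\<le>m. cmod (b k)) * cmod (gauss_weight m c x))"
      unfolding norm_mult by (intro mult_mono norm_gauss_comb_le) auto
    then show ?thesis
      by (simp add: norm_gauss_weight mult_ac)
  qed
qed (use assms sqint_gauss_weight in \<open>auto intro: sum_nonneg\<close>)

definition t_iter :: "nat \<Rightarrow> real \<Rightarrow> nat \<Rightarrow> real \<Rightarrow> complex" where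
  "t_iter m c j x = (- 2 * \<i>)^j * of_real (pow_exp_deriv m c j (x\<^sup>2))"

lemma t_iter_0: "t_iter m c 0 x = of_real (x^(2 * m) * exp (- c * x\<^sup>2))"
  by (simp add: t_iter_def pow_exp_deriv_0 power_mult)

lemma t_iter_eq_gauss_comb:
  "t_iter m c j = gauss_comb m c (\<lambda>k. (- 2 * \<i>)^j * of_real (pow_exp_deriv_coeff m c j k))"
  by (simp add: fun_eq_iff t_iter_def gauss_comb_def pow_exp_deriv_def sum_distrib_left
      sum_distrib_right mult_ac)

lemma t_iter_has_vector_derivative:
  "(t_iter m c j has_vector_derivative \<i> * (of_real x * t_iter m c (Suc j) x)) (at x)"
proof -
  have "((\<lambda>x. pow_exp_deriv m c j (x\<^sup>2)) has_real_derivative pow_exp_deriv m c (Suc j) (x\<^sup>2) * (2 * x)) (at x)"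
    by (rule DERIV_chain2[OF has_real_derivative_pow_exp_deriv]) (auto intro!: derivative_eq_intros)
  then have deriv: "(t_iter m c j has_vector_derivative
      (- 2 * \<i>)^j * of_real (pow_exp_deriv m c (Suc j) (x\<^sup>2) * (2 * x))) (at x)"
    unfolding t_iter_def[abs_def] by (intro has_vector_derivative_mult_right has_vector_derivative_of_real)
  have eq: "(- 2 * \<i>)^j * of_real (pow_exp_deriv m c (Suc j) (x\<^sup>2) * (2 * x))
      = \<i> * (of_real x * t_iter m c (Suc j) x)"
    by (simp add: t_iter_def mult_ac)
  show ?thesis
    using deriv unfolding eq .
qed

lemma t_rel_t_iter:
  assumes "0 < c"
  shows "t_rel (t_iter m c j) (t_iter m c (Suc j))"
proof -
  define g where "g x = of_real x * t_iter m c (Suc j) x" for x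
  have "p_rel (t_iter m c j) g"
  proof (rule p_rel_of_has_vector_derivative)
    show "(t_iter m c j has_vector_derivative \<i> * g x) (at x)" for x
      unfolding g_def by (rule t_iter_has_vector_derivative)
    show "continuous_on UNIV g"
      unfolding g_def t_iter_eq_gauss_comb by (intro continuous_intros continuous_on_gauss_comb)
    show "sqint (t_iter m c j)" "sqint g"
      unfolding g_def t_iter_eq_gauss_comb using assms
      by (auto intro: sqint_gauss_comb sqint_mult_gauss_comb)
  qed
  moreover have "AE x in lborel. t_iter m c (Suc j) x = g x / of_real x"
    using AE_lborel_singleton[of 0] by eventually_elim (simp add: g_def)
  ultimately show ?thesis
    unfolding t_rel_def using sqint_gauss_comb[OF assms] by (auto simp: t_iter_eq_gauss_comb)
qed

lemma funpow_diffs: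
  fixes b :: "nat \<Rightarrow> 'a::{comm_ring_1,ring_char_0}"
  shows "(diffs ^^ k) b n = of_nat ((n + k) choose k) * fact k * b (n + k)"
proof (induction k arbitrary: n)
  case (Suc k)
  have "Suc n * (Suc (n + k) choose k) = Suc k * (Suc (n + k) choose Suc k)"
    using diff_times_binomial[of "Suc (n + k)" k] by (simp add: Suc_diff_le)
  then have coeff: "(of_nat (Suc n) * of_nat (Suc (n + k) choose k) * fact k :: 'a)
      = of_nat (Suc (n + k) choose Suc k) * fact (Suc k)"
    by (simp only: fact_Suc of_nat_mult[symmetric] mult_ac)
  have "(diffs ^^ Suc k) b n = of_nat (Suc n) * (diffs ^^ k) b (Suc n)"
    by (simp only: funpow.simps o_apply diffs_def)
  also have "\<dots> = of_nat (Suc n) * of_nat (Suc (n + k) choose k) * fact k * b (Suc (n + k))"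
    by (simp only: Suc.IH add_Suc mult.assoc)
  finally show ?case
    unfolding coeff add_Suc_right .
qed simp

lemma powser_higher_deriv_sums:
  fixes f :: "'a::{real_normed_field,banach} \<Rightarrow> 'a"
  assumes sums: "\<And>z. norm z < K \<Longrightarrow> (\<lambda>n. b n * z^n) sums f z" and "norm z < K"
  shows "(\<lambda>n. (diffs ^^ k) b n * z^n) sums (deriv ^^ k) f z"
  using \<open>norm z < K\<close>
proof (induction k arbitrary: z)
  case (Suc k)
  define g where "g w = (\<Sum>n. (diffs ^^ k) b n * w^n)" for w
  define g' where "g' = (\<Sum>n. diffs ((diffs ^^ k) b) n * z^n)"
  have "(g has_field_derivative g') (at z)"
    unfolding g_def[abs_def] g'_def
    using Suc by (intro termdiffs_strong'[of K]) (auto intro: sums_summable)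
  then have deriv: "((deriv ^^ k) f has_field_derivative g') (at z)"
    by (rule has_field_derivative_transform_within_open[where S = "ball 0 K"])
      (use Suc in \<open>auto simp: g_def intro!: sums_unique[symmetric]\<close>)
  then have "(\<lambda>n. diffs ((diffs ^^ k) b) n * z^n) sums g'"
    by (intro termdiffs_sums_strong[OF Suc.IH _ Suc.prems])
  moreover have "(deriv ^^ Suc k) f z = g'"
    using deriv by (simp add: DERIV_imp_deriv)
  ultimately show ?case
    by simp
qed (use sums in simp)

lemma ln_ratio_sums:
  fixes a :: real
  assumes "\<bar>a\<bar> < 1"
  shows "(\<lambda>n. (if odd n then 2 / real n else 0) * a^n) sums ln ((1 + a) / (1 - a))"
proof -
  have "(\<lambda>n. - ((- a)^n) / real n - - (a^n) / real n) sums (ln (1 + a) - ln (1 + - a))"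
    using assms ln_series'[of a] ln_series'[of "- a"] by (intro sums_diff) auto
  moreover have "ln (1 + a) - ln (1 + - a) = ln ((1 + a) / (1 - a))"
    using assms by (simp add: ln_div abs_less_iff)
  moreover have "- ((- a)^n) / real n - - (a^n) / real n = (if odd n then 2 / real n else 0) * a^n" for n
    by (cases "even n") (simp_all add: field_simps)
  ultimately show ?thesis
    by simp
qed

lemma ln_ratio_higher_deriv_sums:
  fixes a :: real
  assumes "\<bar>a\<bar> < 1"
  shows "(\<lambda>n. 2 * real ((2 * n + 1) choose k) * fact k / real (2 * n + 1) * a^(2 * n + 1 - k))
           sums (deriv ^^ k) (\<lambda>a. ln ((1 + a) / (1 - a))) a"
proof -
  define b :: "nat \<Rightarrow> real" where "b n = (if odd n then 2 / real n else 0)" for n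
  define g where "g i = real (i choose k) * fact k * b i * a^(i - k)" for i
  have "(\<lambda>n. (diffs ^^ k) b n * a^n) sums (deriv ^^ k) (\<lambda>a. ln ((1 + a) / (1 - a))) a"
    using assms by (intro powser_higher_deriv_sums[where K = 1]) (auto simp: b_def ln_ratio_sums)
  then have "(\<lambda>n. g (n + k)) sums (deriv ^^ k) (\<lambda>a. ln ((1 + a) / (1 - a))) a"
    by (simp add: g_def funpow_diffs add.commute)
  then have "g sums (deriv ^^ k) (\<lambda>a. ln ((1 + a) / (1 - a))) a"
    by (subst (asm) sums_zero_iff_shift) (simp_all add: g_def binomial_eq_0)
  then have "(\<lambda>n. g (2 * n + 1)) sums (deriv ^^ k) (\<lambda>a. ln ((1 + a) / (1 - a))) a"
    by (subst sums_mono_reindex) (auto simp: g_def b_def strict_mono_def elim!: oddE)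
  then show ?thesis
    by (simp add: g_def b_def mult_ac)
qed

lemma gauss_comb_linear_combination:
  "(\<Sum>n\<in>A. w n * gauss_comb m c (b n) x) - gauss_comb m c l x
     = gauss_comb m c (\<lambda>k. (\<Sum>n\<in>A. w n * b n k) - l k) x"
  by (simp add: gauss_comb_def sum_distrib_left sum_distrib_right sum_subtractf left_diff_distrib
      mult.assoc sum.swap[of _ A])

lemma l2norm_gauss_comb_tendsto_0:
  assumes "0 < c" and lim: "\<And>k. (\<lambda>N. e N k) \<longlonglongrightarrow> 0"
  shows "(\<lambda>N. l2norm (gauss_comb m c (e N))) \<longlonglongrightarrow> 0"
proof (rule tendsto_sandwich)
  show "\<forall>\<^sub>F N in sequentially. 0 \<le> l2norm (gauss_comb m c (e N))"
    by (simp add: l2norm_def)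
  show "\<forall>\<^sub>F N in sequentially. l2norm (gauss_comb m c (e N)) \<le> (\<Sum>k\<le>m. cmod (e N k)) * l2norm (gauss_weight m c)"
    using l2norm_gauss_comb_le[OF assms(1)] by simp
  have "(\<lambda>N. (\<Sum>k\<le>m. cmod (e N k)) * l2norm (gauss_weight m c)) \<longlonglongrightarrow> (\<Sum>k\<le>m. 0) * l2norm (gauss_weight m c)"
    by (intro tendsto_intros tendsto_norm_zero lim)
  then show "(\<lambda>N. (\<Sum>k\<le>m. cmod (e N k)) * l2norm (gauss_weight m c)) \<longlonglongrightarrow> 0"
    by simp
qed simp

lemma odd_power_rescale:
  fixes s c :: real
  assumes "odd j" "k \<le> j"
  shows "(2 * s)^j * (- c)^(j - k) = - ((- 2 * s)^k * (2 * s * c)^(j - k))"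
proof -
  obtain r where j: "j = k + r"
    using assms(2) le_iff_add by blast
  have sign: "(- 1 :: real)^r = - ((- 1)^k)"
    using assms(1) unfolding j by (cases "even k") auto
  have "(2 * s)^j * (- c)^(j - k) = (2 * s)^k * ((2 * s)^r * (- c)^r)"
    unfolding j by (simp add: power_add mult.assoc)
  also have "(2 * s)^r * (- c)^r = (- 1 * (2 * s * c))^r"
    using power_mult_distrib[of "2 * s" "- c" r] by simp
  also have "\<dots> = - ((- 1)^k * (2 * s * c)^r)"
    by (simp only: power_mult_distrib sign)
  also have "(2 * s)^k * - ((- 1)^k * (2 * s * c)^r) = - (((- 1)^k * (2 * s)^k) * (2 * s * c)^r)"
    by (simp add: mult_ac)
  also have "(- 1)^k * (2 * s)^k = (- 1 * (2 * s))^k"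
    by (simp only: power_mult_distrib)
  finally show ?thesis
    by (simp add: j)
qed

lemma S_series_term_coeff:
  fixes s c :: real and n :: nat
  defines "j \<equiv> 2 * n + 1"
  shows "of_real ((- 1)^n / real j * s^j) * ((- 2 * \<i>)^j * of_real (pow_exp_deriv_coeff m c j k))
      = \<i> * of_real (real (m choose k) * (- 2 * s)^k / 2
                     * (2 * real (j choose k) * fact k / real j * (2 * s * c)^(j - k)))"
proof -
  have i_pow: "(- 2 * \<i>)^j = - \<i> * of_real ((- 1)^n * 2^j)"
    by (simp add: j_def power_mult power_mult_distrib power_minus[of 4])
  have "of_real ((- 1)^n / real j * s^j) * ((- 2 * \<i>)^j * of_real (pow_exp_deriv_coeff m c j k))
      = - \<i> * of_real ((- 1)^n / real j * s^j * ((- 1)^n * 2^j) * pow_exp_deriv_coeff m c j k)"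
    unfolding i_pow by (simp add: mult_ac)
  also have "(- 1)^n / real j * s^j * ((- 1)^n * 2^j) * pow_exp_deriv_coeff m c j k
      = real (j choose k) * real (m choose k) * fact k / real j * ((2 * s)^j * (- c)^(j - k))"
    by (simp add: pow_exp_deriv_coeff_def power_mult_distrib field_simps flip: power_add mult_2)
  also have "\<dots> = - (real (m choose k) * (- 2 * s)^k / 2
                     * (2 * real (j choose k) * fact k / real j * (2 * s * c)^(j - k)))"
  proof (cases "k \<le> j")
    case True
    have "(2 * s)^j * (- c)^(j - k) = - ((- 2 * s)^k * (2 * s * c)^(j - k))"
      using True by (intro odd_power_rescale) (simp_all add: j_def)
    then show ?thesis
      by simp
  qed (simp add: binomial_eq_0)
  finally show ?thesis
    by simp
qed

definition S_limit_coeff :: "nat \<Rightarrow> real \<Rightarrow> real \<Rightarrow> nat \<Rightarrow> complex" where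
  "S_limit_coeff m s \<alpha> k =
     \<i> * of_real (real (m choose k) * (- 2 * s)^k / 2 * (deriv ^^ k) (\<lambda>a. ln ((1 + a) / (1 - a))) \<alpha>)"

lemma S_partial_sums_tendsto:
  assumes "0 < c" "\<alpha> = 2 * s * c" "\<bar>\<alpha>\<bar> < 1"
  shows "(\<lambda>N. l2norm (\<lambda>x. (\<Sum>n\<le>N. of_real ((- 1)^n / real (2 * n + 1) * s^(2 * n + 1)) * t_iter m c (2 * n + 1) x)
                        - gauss_comb m c (S_limit_coeff m s \<alpha>) x)) \<longlonglongrightarrow> 0"
proof -
  define l where "l = S_limit_coeff m s \<alpha>"
  define w where "w n = complex_of_real ((- 1)^n / real (2 * n + 1) * s^(2 * n + 1))" for n
  define b where "b j k = (- 2 * \<i>)^j * of_real (pow_exp_deriv_coeff m c j k)" for j k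
  define a where "a k n = 2 * real ((2 * n + 1) choose k) * fact k / real (2 * n + 1) * \<alpha>^(2 * n + 1 - k)" for k n
  have "(\<lambda>N. l2norm (gauss_comb m c (\<lambda>k. (\<Sum>n\<le>N. w n * b (2 * n + 1) k) - l k))) \<longlonglongrightarrow> 0"
  proof (rule l2norm_gauss_comb_tendsto_0[OF assms(1)])
    fix k
    have "(\<lambda>N. \<Sum>n\<le>N. a k n) \<longlonglongrightarrow> (deriv ^^ k) (\<lambda>a. ln ((1 + a) / (1 - a))) \<alpha>"
      using ln_ratio_higher_deriv_sums[OF assms(3)] unfolding a_def sums_def_le .
    then have lim: "(\<lambda>N. \<i> * of_real (real (m choose k) * (- 2 * s)^k / 2 * (\<Sum>n\<le>N. a k n))) \<longlonglongrightarrow> l k"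
      unfolding l_def S_limit_coeff_def by (intro tendsto_intros)
    have sum_eq: "(\<Sum>n\<le>N. w n * b (2 * n + 1) k)
        = \<i> * of_real (real (m choose k) * (- 2 * s)^k / 2 * (\<Sum>n\<le>N. a k n))" for N
      unfolding w_def b_def a_def assms(2) S_series_term_coeff
      by (simp add: sum_distrib_left mult.assoc)
    show "(\<lambda>N. (\<Sum>n\<le>N. w n * b (2 * n + 1) k) - l k) \<longlonglongrightarrow> 0"
      unfolding sum_eq by (rule LIM_zero[OF lim])
  qed
  then show ?thesis
    unfolding gauss_comb_linear_combination[symmetric] t_iter_eq_gauss_comb w_def b_def l_def .
qed

lemma even_fun_t_iter: "even_fun (t_iter m c j)"
  by (simp add: even_fun_def t_iter_def)

lemma S_graph_t_iter:
  assumes "0 < c" "\<alpha> = 2 * sqrt \<epsilon> * c" "\<bar>\<alpha>\<bar> < 1"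
  shows "S_graph \<epsilon> (t_iter m c 0)
           (\<lambda>x. - of_real (1 / sqrt \<epsilon>) * gauss_comb m c (S_limit_coeff m (sqrt \<epsilon>) \<alpha>) x)"
  unfolding S_graph_def
proof (intro conjI exI)
  show "sqint (t_iter m c 0)" "sqint (gauss_comb m c (S_limit_coeff m (sqrt \<epsilon>) \<alpha>))"
    unfolding t_iter_eq_gauss_comb using assms(1) by (rule sqint_gauss_comb)+
  show "\<forall>j. t_rel (t_iter m c j) (t_iter m c (Suc j))"
    using t_rel_t_iter[OF assms(1)] by blast
  show "(\<lambda>N. l2norm (\<lambda>x. (\<Sum>n\<le>N. of_real ((- 1)^n / real (2 * n + 1) * sqrt \<epsilon>^(2 * n + 1))
                                    * t_iter m c (2 * n + 1) x)
                        - gauss_comb m c (S_limit_coeff m (sqrt \<epsilon>) \<alpha>) x)) \<longlonglongrightarrow> 0"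
    using assms by (rule S_partial_sums_tendsto)
qed (simp_all add: even_fun_t_iter)

theorem lemma3p5:
  fixes \<epsilon> \<alpha> :: real and m :: nat
  assumes "0 < \<epsilon>" "\<epsilon> \<le> 1" "0 < \<alpha>" "\<alpha> < 1"
  shows "(\<lambda>x. complex_of_real (x^(2*m) * exp (- \<alpha> * x^2 / (2 * sqrt \<epsilon>)))) \<in> S_dom \<epsilon> \<and>
         S_graph \<epsilon> (\<lambda>x. complex_of_real (x^(2*m) * exp (- \<alpha> * x^2 / (2 * sqrt \<epsilon>))))
           (\<lambda>x. - (\<i> / complex_of_real (2 * sqrt \<epsilon>)) *
              complex_of_real (\<Sum>k\<le>m. real (m choose k) * (- 2 * sqrt \<epsilon>)^k *
                 (deriv ^^ k) (\<lambda>a. ln ((1 + a) / (1 - a))) \<alpha> *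
                 x^(2*m - 2*k) * exp (- \<alpha> * x^2 / (2 * sqrt \<epsilon>))))"
    (is "?f \<in> _ \<and> S_graph _ ?f ?h")
proof -
  define c where "c = \<alpha> / (2 * sqrt \<epsilon>)"
  have "0 < sqrt \<epsilon>" "0 < c" "\<bar>\<alpha>\<bar> < 1" and \<alpha>: "\<alpha> = 2 * sqrt \<epsilon> * c"
    using assms by (simp_all add: c_def)
  have exponent: "- \<alpha> * x\<^sup>2 / (2 * sqrt \<epsilon>) = - c * x\<^sup>2" for x
    by (simp add: c_def)
  have power_eq: "x^(2 * m - 2 * k) = (x\<^sup>2)^(m - k)" for x :: real and k
    by (simp add: power_mult flip: diff_mult_distrib2)
  have f: "?f = t_iter m c 0"
    unfolding fun_eq_iff t_iter_0 exponent by simp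
  have h: "?h = (\<lambda>x. - of_real (1 / sqrt \<epsilon>) * gauss_comb m c (S_limit_coeff m (sqrt \<epsilon>) \<alpha>) x)"
    unfolding fun_eq_iff exponent power_eq using \<open>0 < sqrt \<epsilon>\<close>
    by (simp add: gauss_comb_def S_limit_coeff_def sum_distrib_left field_simps)
  have "S_graph \<epsilon> ?f ?h"
    unfolding f h using \<open>0 < c\<close> \<alpha> \<open>\<bar>\<alpha>\<bar> < 1\<close> by (rule S_graph_t_iter)
  then show ?thesis
    unfolding S_dom_def by blast
qed

end
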